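(* Let $\beta,\delta\in(0,1)$, $K>0$, and let $\eta_1,\eta_2\ge0$ be constants. Consider $$\frac{df}{dt}=\tfrac12 fm\beta L-\delta f-\eta_1 f^{3/2},\qquad \frac{dm}{dt}=\tfrac12 fm\beta L-\delta m-\eta_2 m^{3/2},\qquad L=1-\frac{f+m}{K}.$$ If $\beta K<2\delta$, then the trivial equilibrium $(0,0)$ is globally asymptotically stable.
   Context: $f,m$ are female and male densities, with populations considered in the region $0\le f,m$, $f+m\le K$. The model uses power-law harvesting of both females and males. *)

theory Defs
  imports "HOL-Analysis.Analysis"
begin

definition region :: "real \<Rightarrow> (real \<times> real) set" where
  "region K = {(f, m). 0 \<le> f \<and> 0 \<le> m \<and> f + m \<le> K}"

definition harvest_field ::
  "real \<Rightarrow> real \<Rightarrow> real \<Rightarrow> real \<Rightarrow> real \<Rightarrow> real \<times> real \<Rightarrow> real \<times> real" where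
  "harvest_field \<beta> \<delta> K \<eta>1 \<eta>2 p =
     (let f = fst p; m = snd p; L = 1 - (f + m) / K in
      (1/2 * f * m * \<beta> * L - \<delta> * f - \<eta>1 * f powr (3/2),
       1/2 * f * m * \<beta> * L - \<delta> * m - \<eta>2 * m powr (3/2)))"

definition is_solution ::
  "real \<Rightarrow> real \<Rightarrow> real \<Rightarrow> real \<Rightarrow> real \<Rightarrow> (real \<Rightarrow> real \<times> real) \<Rightarrow> bool" where
  "is_solution \<beta> \<delta> K \<eta>1 \<eta>2 x \<longleftrightarrow>
     (\<forall>t\<ge>0. x t \<in> region K \<and>
        (x has_vector_derivative harvest_field \<beta> \<delta> K \<eta>1 \<eta>2 (x t)) (at t within {0..}))"

definition globally_asymptotically_stable_origin ::
  "real \<Rightarrow> real \<Rightarrow> real \<Rightarrow> real \<Rightarrow> real \<Rightarrow> bool" where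
  "globally_asymptotically_stable_origin \<beta> \<delta> K \<eta>1 \<eta>2 \<longleftrightarrow>
     harvest_field \<beta> \<delta> K \<eta>1 \<eta>2 (0, 0) = (0, 0) \<and>
     (\<forall>\<epsilon>>0. \<exists>r>0. \<forall>x. is_solution \<beta> \<delta> K \<eta>1 \<eta>2 x \<longrightarrow> norm (x 0) < r \<longrightarrow>
         (\<forall>t\<ge>0. norm (x t) < \<epsilon>)) \<and>
     (\<forall>x. is_solution \<beta> \<delta> K \<eta>1 \<eta>2 x \<longrightarrow> (x \<longlongrightarrow> (0, 0)) at_top)"

end

theory Submission
  imports Defs "HOL-Real_Asymp.Real_Asymp"
begin

text \<open>The total population V = f + m is a Lyapunov function. On the region, the harvesting terms
  only decrease V, the factor L is at most 1, and f m \<le> (f + m)^2 / 4 \<le> K (f + m) / 4, so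
  V' \<le> -(\<delta> - \<beta> K / 4) V. Since \<beta> K < 2 \<delta> forces \<delta> - \<beta> K / 4 > 0, Gronwall's inequality
  makes V, and with it the norm of the state, decay exponentially.\<close>

lemma has_vector_derivative_fst_plus_snd:
  assumes "(x has_vector_derivative D) F"
  shows "((\<lambda>t. fst (x t) + snd (x t)) has_real_derivative fst D + snd D) F"
proof -
  have "((\<lambda>t. fst (x t)) has_vector_derivative fst D) F"
    "((\<lambda>t. snd (x t)) has_vector_derivative snd D) F"
    using assms unfolding has_vector_derivative_def
    by (auto dest: has_derivative_fst has_derivative_snd)
  then show ?thesis
    by (simp add: has_real_derivative_iff_has_vector_derivative has_vector_derivative_add)
qed

lemma differential_inequality_imp_exp_decay:
  fixes V V' :: "real \<Rightarrow> real"
  assumes deriv: "\<And>s. 0 \<le> s \<Longrightarrow> (V has_real_derivative V' s) (at s within {0..})"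
    and ineq: "\<And>s. 0 \<le> s \<Longrightarrow> V' s \<le> - c * V s"
    and "0 \<le> t"
  shows "V t \<le> V 0 * exp (- c * t)"
proof -
  define g where "g s = V s * exp (c * s)" for s
  have g_deriv: "(g has_real_derivative (V' s + c * V s) * exp (c * s)) (at s within {0..})"
    if "0 \<le> s" for s
    unfolding g_def
    by (rule derivative_eq_intros deriv that refl | simp add: algebra_simps)+
  have "g t \<le> g 0"
  proof (rule DERIV_nonpos_imp_decreasing_open[OF \<open>0 \<le> t\<close>])
    fix s assume s: "0 < s" "s < t"
    have "at s within {0..} = at s"
      by (rule at_within_interior) (use s in auto)
    moreover have "(V' s + c * V s) * exp (c * s) \<le> 0"
      using ineq[of s] s by (simp add: mult_nonpos_nonneg)
    ultimately show "\<exists>y. (g has_real_derivative y) (at s) \<and> y \<le> 0"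
      using g_deriv[of s] s by auto
  next
    have "continuous (at s within {0..}) g" if "0 \<le> s" for s
      using g_deriv[OF that] by (rule DERIV_continuous)
    then show "continuous_on {0..t} g"
      unfolding continuous_on_eq_continuous_within
      by (auto intro: continuous_within_subset[of _ "{0..}"])
  qed
  then have "V t * exp (c * t) * exp (- c * t) \<le> V 0 * exp (- c * t)"
    unfolding g_def by (intro mult_right_mono) auto
  then show ?thesis
    by (simp add: mult.assoc flip: exp_add)
qed

lemma harvest_field_total_le:
  assumes "0 < \<beta>" "0 < K" "0 \<le> \<eta>1" "0 \<le> \<eta>2" "(f, m) \<in> region K"
  shows "fst (harvest_field \<beta> \<delta> K \<eta>1 \<eta>2 (f, m)) + snd (harvest_field \<beta> \<delta> K \<eta>1 \<eta>2 (f, m))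
    \<le> - (\<delta> - \<beta> * K / 4) * (f + m)"
proof -
  from assms have f: "0 \<le> f" and m: "0 \<le> m" and total: "f + m \<le> K"
    by (auto simp: region_def)
  have "4 * (f * m) \<le> (f + m) * (f + m)"
    using zero_le_square[of "f - m"] by (simp add: algebra_simps)
  moreover have "(f + m) * (f + m) \<le> K * (f + m)"
    using total f m by (simp add: mult_right_mono)
  ultimately have "\<beta> * (f * m) \<le> \<beta> * (K * (f + m) / 4)"
    using \<open>0 < \<beta>\<close> by (intro mult_left_mono) auto
  moreover have "f * m * \<beta> * (1 - (f + m) / K) \<le> \<beta> * (f * m)"
    using mult_left_le[of "1 - (f + m) / K" "\<beta> * (f * m)"] f m assms by (simp add: mult_ac)
  ultimately have "f * m * \<beta> * (1 - (f + m) / K) \<le> \<beta> * (K * (f + m) / 4)"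
    by linarith
  then have growth: "1/2 * f * m * \<beta> * (1 - (f + m) / K) \<le> 1/2 * (\<beta> * (K * (f + m) / 4))"
    by (simp only: mult.assoc) (rule mult_left_mono, simp_all)
  have rate: "- (\<delta> - \<beta> * K / 4) * (f + m) = \<beta> * (K * (f + m) / 4) - \<delta> * f - \<delta> * m"
    by (simp add: algebra_simps)
  have "0 \<le> \<eta>1 * f powr (3/2)" "0 \<le> \<eta>2 * m powr (3/2)"
    using assms by auto
  then show ?thesis
    unfolding harvest_field_def Let_def fst_conv snd_conv rate using growth by linarith
qed

lemma solution_total_exp_decay:
  assumes "0 < \<beta>" "0 < K" "0 \<le> \<eta>1" "0 \<le> \<eta>2"
    and sol: "is_solution \<beta> \<delta> K \<eta>1 \<eta>2 x" and "0 \<le> t"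
  shows "fst (x t) + snd (x t) \<le> (fst (x 0) + snd (x 0)) * exp (- (\<delta> - \<beta> * K / 4) * t)"
proof (rule differential_inequality_imp_exp_decay[OF _ _ \<open>0 \<le> t\<close>])
  fix s :: real assume "0 \<le> s"
  with sol have "x s \<in> region K"
    and "(x has_vector_derivative harvest_field \<beta> \<delta> K \<eta>1 \<eta>2 (x s)) (at s within {0..})"
    unfolding is_solution_def by auto
  then show "((\<lambda>t. fst (x t) + snd (x t)) has_real_derivative
      fst (harvest_field \<beta> \<delta> K \<eta>1 \<eta>2 (x s)) + snd (harvest_field \<beta> \<delta> K \<eta>1 \<eta>2 (x s)))
      (at s within {0..})"
    and "fst (harvest_field \<beta> \<delta> K \<eta>1 \<eta>2 (x s)) + snd (harvest_field \<beta> \<delta> K \<eta>1 \<eta>2 (x s))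
      \<le> - (\<delta> - \<beta> * K / 4) * (fst (x s) + snd (x s))"
    using has_vector_derivative_fst_plus_snd
      harvest_field_total_le[OF assms(1-4), of "fst (x s)" "snd (x s)"]
    by auto
qed

lemma norm_le_fst_plus_snd:
  fixes p :: "real \<times> real"
  assumes "0 \<le> fst p" "0 \<le> snd p"
  shows "norm p \<le> fst p + snd p"
  using norm_Pair_le[of "fst p" "snd p"] assms by simp

lemma fst_plus_snd_le_norm:
  fixes p :: "real \<times> real"
  shows "fst p + snd p \<le> 2 * norm p"
  using norm_fst_le[of "fst p" "snd p"] norm_snd_le[of "snd p" "fst p"] by simp

lemma solution_norm_exp_decay:
  assumes "0 < \<beta>" "0 < K" "0 \<le> \<eta>1" "0 \<le> \<eta>2"
    and sol: "is_solution \<beta> \<delta> K \<eta>1 \<eta>2 x" and "0 \<le> t"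
  shows "norm (x t) \<le> 2 * norm (x 0) * exp (- (\<delta> - \<beta> * K / 4) * t)"
proof -
  have "x t \<in> region K"
    using sol \<open>0 \<le> t\<close> unfolding is_solution_def by auto
  then have "norm (x t) \<le> fst (x t) + snd (x t)"
    by (intro norm_le_fst_plus_snd) (auto simp: region_def)
  also have "\<dots> \<le> (fst (x 0) + snd (x 0)) * exp (- (\<delta> - \<beta> * K / 4) * t)"
    by (rule solution_total_exp_decay[OF assms])
  also have "\<dots> \<le> 2 * norm (x 0) * exp (- (\<delta> - \<beta> * K / 4) * t)"
    by (intro mult_right_mono fst_plus_snd_le_norm) simp
  finally show ?thesis .
qed

lemma tendsto_zero_if_norm_le_exp_decay:
  fixes x :: "real \<Rightarrow> 'a::real_normed_vector"
  assumes "0 < c" and bound: "\<And>t. 0 \<le> t \<Longrightarrow> norm (x t) \<le> C * exp (- c * t)"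
  shows "(x \<longlongrightarrow> 0) at_top"
proof (rule tendsto_norm_zero_cancel, rule tendsto_sandwich[OF _ _ tendsto_const])
  show "((\<lambda>t. C * exp (- c * t)) \<longlongrightarrow> 0) at_top"
    using \<open>0 < c\<close> by real_asymp
  show "\<forall>\<^sub>F t in at_top. norm (x t) \<le> C * exp (- c * t)"
    using eventually_ge_at_top[of 0] by eventually_elim (rule bound)
qed simp

theorem mainTheorem17:
  fixes \<beta> \<delta> K \<eta>1 \<eta>2 :: real
  assumes "0 < \<beta>" "\<beta> < 1" "0 < \<delta>" "\<delta> < 1" "0 < K"
    and "0 \<le> \<eta>1" "0 \<le> \<eta>2"
    and "\<beta> * K < 2 * \<delta>"
  shows "globally_asymptotically_stable_origin \<beta> \<delta> K \<eta>1 \<eta>2"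
proof -
  define c where "c = \<delta> - \<beta> * K / 4"
  have "0 < c"
    unfolding c_def using assms by simp
  have decay: "norm (x t) \<le> 2 * norm (x 0) * exp (- c * t)"
    if "is_solution \<beta> \<delta> K \<eta>1 \<eta>2 x" "0 \<le> t" for x t
    unfolding c_def using solution_norm_exp_decay assms(1,5-7) that .
  have "norm (x t) < \<epsilon>"
    if "is_solution \<beta> \<delta> K \<eta>1 \<eta>2 x" "norm (x 0) < \<epsilon> / 2" "0 \<le> t" for x t \<epsilon>
  proof -
    have "exp (- c * t) \<le> 1"
      using \<open>0 < c\<close> \<open>0 \<le> t\<close> by simp
    then show ?thesis
      using decay[OF that(1,3)] that(2) mult_left_le[of "exp (- c * t)" "2 * norm (x 0)"] by simp
  qed
  moreover have "(x \<longlongrightarrow> 0) at_top" if "is_solution \<beta> \<delta> K \<eta>1 \<eta>2 x" for x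
    using tendsto_zero_if_norm_le_exp_decay[OF \<open>0 < c\<close> decay[OF that]] .
  ultimately show ?thesis
    unfolding globally_asymptotically_stable_origin_def
    by (auto simp: harvest_field_def zero_prod_def intro!: exI[of _ "\<epsilon> / 2" for \<epsilon>])
qed

end
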